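(* Let $V$ be a set of variables and $\mathcal{R}=\{r_1,\ldots,r_m\}$ be a set of transition rules on $V$. Then $s \xrightarrow{r_i} s'$ iff the sequent $\llbracket r_1\rrbracket @ 0,\ldots,\llbracket r_m\rrbracket @ 0;\ \llbracket s\rrbracket @ w \vdash \delta_1\llbracket s'\rrbracket @ w$ is provable in HyLL.
   Context: HyLL is hybrid (intuitionistic) linear logic with sequents $\Gamma;\Delta\vdash C@w$ ($\Gamma$ unbounded context, $\Delta$ linear context) and hybrid connectives $A\ \mathsf{at}\ u$ and $\downarrow u.A$; worlds here form the monoid $\langle\mathbb{N},+,0\rangle$ (written $u.v$ for composition). A state $s$ over $V=\{a_1,\ldots,a_n\}$ is a conjunction $p_1(a_1)\wedge\cdots\wedge p_n(a_n)$ with each $p_i$ either present or absent; a transition rule $r:s\to s'$ enables the transition $s\xrightarrow{r}s'$. Encoding into HyLL: $\llbracket p_i(a_i)\rrbracket = p_i(a_i)$ (an atom), $\llbracket s\rrbracket=\bigotimes_{i\in 1..n}\llbracket p_i(a_i)\rrbracket$, $\llbracket r: s\to s'\rrbracket = \forall w.\big((\llbracket s\rrbracket\ \mathsf{at}\ w)\multimap \delta_1(\llbracket s'\rrbracket)\ \mathsf{at}\ w\big)$, where the delay connective is $\delta_v A = \downarrow u.(A\ \mathsf{at}\ u.v)$. *)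

theory Defs
  imports "HOL-Library.Multiset"
begin

text \<open>Worlds are elements of the monoid (nat, +, 0).  To support eigenvariables of the
world quantifier, judgement worlds are elements of the free commutative extension
nat x (multisets of world parameters); closed concrete worlds are (n, empty).\<close>

type_synonym world = "nat \<times> nat multiset"

definition wdot :: "world \<Rightarrow> world \<Rightarrow> world" where
  "wdot u v = (fst u + fst v, snd u + snd v)"

definition wnat :: "nat \<Rightarrow> world" where
  "wnat n = (n, {#})"

definition wparam :: "nat \<Rightarrow> world" where
  "wparam a = (0, {#a#})"

text \<open>World terms occurring inside formulas (de Bruijn bound variables).\<close>
datatype wt = WW world | WB nat | WDot wt wt

fun weval :: "wt \<Rightarrow> world" where
  "weval (WW x) = x"
| "weval (WB _) = wnat 0"
| "weval (WDot s t) = wdot (weval s) (weval t)"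

fun wsubst :: "nat \<Rightarrow> world \<Rightarrow> wt \<Rightarrow> wt" where
  "wsubst k x (WW y) = WW y"
| "wsubst k x (WB j) = (if j = k then WW x else if k < j then WB (j - 1) else WB j)"
| "wsubst k x (WDot s t) = WDot (wsubst k x s) (wsubst k x t)"

fun wtparams :: "wt \<Rightarrow> nat set" where
  "wtparams (WW y) = set_mset (snd y)"
| "wtparams (WB _) = {}"
| "wtparams (WDot s t) = wtparams s \<union> wtparams t"

datatype 'a form =
    Atom 'a
  | Tens "'a form" "'a form"
  | One
  | Lolli "'a form" "'a form"
  | With "'a form" "'a form"
  | Top
  | Plus "'a form" "'a form"
  | Zero
  | Bang "'a form"
  | At "'a form" wt
  | Down "'a form"           \<comment> \<open>down u. A, u = bound variable 0\<close>
  | AllW "'a form"           \<comment> \<open>forall over worlds, bound variable 0\<close>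
  | ExW "'a form"            \<comment> \<open>exists over worlds, bound variable 0\<close>

fun fsubst :: "nat \<Rightarrow> world \<Rightarrow> 'a form \<Rightarrow> 'a form" where
  "fsubst k x (Atom p) = Atom p"
| "fsubst k x (Tens A B) = Tens (fsubst k x A) (fsubst k x B)"
| "fsubst k x One = One"
| "fsubst k x (Lolli A B) = Lolli (fsubst k x A) (fsubst k x B)"
| "fsubst k x (With A B) = With (fsubst k x A) (fsubst k x B)"
| "fsubst k x Top = Top"
| "fsubst k x (Plus A B) = Plus (fsubst k x A) (fsubst k x B)"
| "fsubst k x Zero = Zero"
| "fsubst k x (Bang A) = Bang (fsubst k x A)"
| "fsubst k x (At A t) = At (fsubst k x A) (wsubst k x t)"
| "fsubst k x (Down A) = Down (fsubst (Suc k) x A)"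
| "fsubst k x (AllW A) = AllW (fsubst (Suc k) x A)"
| "fsubst k x (ExW A) = ExW (fsubst (Suc k) x A)"

fun fparams :: "'a form \<Rightarrow> nat set" where
  "fparams (Atom p) = {}"
| "fparams (Tens A B) = fparams A \<union> fparams B"
| "fparams One = {}"
| "fparams (Lolli A B) = fparams A \<union> fparams B"
| "fparams (With A B) = fparams A \<union> fparams B"
| "fparams Top = {}"
| "fparams (Plus A B) = fparams A \<union> fparams B"
| "fparams Zero = {}"
| "fparams (Bang A) = fparams A"
| "fparams (At A t) = fparams A \<union> wtparams t"
| "fparams (Down A) = fparams A"
| "fparams (AllW A) = fparams A"
| "fparams (ExW A) = fparams A"

definition jparams :: "'a form \<times> world \<Rightarrow> nat set" where
  "jparams j = fparams (fst j) \<union> set_mset (snd (snd j))"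

definition ctx_params :: "('a form \<times> world) set \<Rightarrow> ('a form \<times> world) multiset \<Rightarrow> nat set" where
  "ctx_params G D = (\<Union>j\<in>G. jparams j) \<union> (\<Union>j\<in>set_mset D. jparams j)"

section \<open>HyLL sequent calculus:  hyll G D C w  means  G ; D |- C @ w\<close>

inductive hyll :: "('a form \<times> world) set \<Rightarrow> ('a form \<times> world) multiset \<Rightarrow> 'a form \<Rightarrow> world \<Rightarrow> bool" where
  init: "hyll G {#(Atom p, w)#} (Atom p) w"
| copy: "(A, u) \<in> G \<Longrightarrow> hyll G (D + {#(A, u)#}) C w \<Longrightarrow> hyll G D C w"
| tensR: "hyll G D1 A w \<Longrightarrow> hyll G D2 B w \<Longrightarrow> hyll G (D1 + D2) (Tens A B) w"
| tensL: "hyll G (D + {#(A, u), (B, u)#}) C w \<Longrightarrow> hyll G (D + {#(Tens A B, u)#}) C w"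
| oneR: "hyll G {#} One w"
| oneL: "hyll G D C w \<Longrightarrow> hyll G (D + {#(One, u)#}) C w"
| lolliR: "hyll G (D + {#(A, w)#}) B w \<Longrightarrow> hyll G D (Lolli A B) w"
| lolliL: "hyll G D1 A u \<Longrightarrow> hyll G (D2 + {#(B, u)#}) C w \<Longrightarrow>
           hyll G (D1 + D2 + {#(Lolli A B, u)#}) C w"
| withR: "hyll G D A w \<Longrightarrow> hyll G D B w \<Longrightarrow> hyll G D (With A B) w"
| withL1: "hyll G (D + {#(A, u)#}) C w \<Longrightarrow> hyll G (D + {#(With A B, u)#}) C w"
| withL2: "hyll G (D + {#(B, u)#}) C w \<Longrightarrow> hyll G (D + {#(With A B, u)#}) C w"
| topR: "hyll G D Top w"
| plusR1: "hyll G D A w \<Longrightarrow> hyll G D (Plus A B) w"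
| plusR2: "hyll G D B w \<Longrightarrow> hyll G D (Plus A B) w"
| plusL: "hyll G (D + {#(A, u)#}) C w \<Longrightarrow> hyll G (D + {#(B, u)#}) C w \<Longrightarrow>
          hyll G (D + {#(Plus A B, u)#}) C w"
| zeroL: "hyll G (D + {#(Zero, u)#}) C w"
| bangR: "hyll G {#} A w \<Longrightarrow> hyll G {#} (Bang A) w"
| bangL: "hyll (insert (A, u) G) D C w \<Longrightarrow> hyll G (D + {#(Bang A, u)#}) C w"
| atR: "hyll G D A (weval t) \<Longrightarrow> hyll G D (At A t) w"
| atL: "hyll G (D + {#(A, weval t)#}) C w \<Longrightarrow> hyll G (D + {#(At A t, u)#}) C w"
| downR: "hyll G D (fsubst 0 w A) w \<Longrightarrow> hyll G D (Down A) w"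
| downL: "hyll G (D + {#(fsubst 0 u A, u)#}) C w \<Longrightarrow> hyll G (D + {#(Down A, u)#}) C w"
| allR: "a \<notin> ctx_params G D \<union> fparams A \<union> set_mset (snd w) \<Longrightarrow>
         hyll G D (fsubst 0 (wparam a) A) w \<Longrightarrow> hyll G D (AllW A) w"
| allL: "hyll G (D + {#(fsubst 0 x A, u)#}) C w \<Longrightarrow> hyll G (D + {#(AllW A, u)#}) C w"
| exR: "hyll G D (fsubst 0 x A) w \<Longrightarrow> hyll G D (ExW A) w"
| exL: "a \<notin> ctx_params G D \<union> fparams A \<union> fparams C \<union> set_mset (snd w) \<union> set_mset (snd u) \<Longrightarrow>
        hyll G (D + {#(fsubst 0 (wparam a) A, u)#}) C w \<Longrightarrow> hyll G (D + {#(ExW A, u)#}) C w"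

text \<open>A state over the variable list V assigns to each variable a value:
True = present, False = absent.  The atom p_i(a_i) is Atom (a_i, value).\<close>

type_synonym 'v state = "'v \<Rightarrow> bool"
type_synonym 'v trule = "'v state \<times> 'v state"

definition enables :: "'v list \<Rightarrow> 'v trule \<Rightarrow> 'v state \<Rightarrow> 'v state \<Rightarrow> bool" where
  "enables V r s s' \<longleftrightarrow> (\<forall>a\<in>set V. s a = fst r a \<and> s' a = snd r a)"

fun tens_list :: "'a form list \<Rightarrow> 'a form" where
  "tens_list [] = One"
| "tens_list [A] = A"
| "tens_list (A # B # As) = Tens A (tens_list (B # As))"

definition enc_state :: "'v list \<Rightarrow> 'v state \<Rightarrow> ('v \<times> bool) form" where
  "enc_state V s = tens_list (map (\<lambda>a. Atom (a, s a)) V)"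

text \<open>delta_v A = down u. (A at u.v), for closed A.\<close>
definition delta :: "nat \<Rightarrow> 'a form \<Rightarrow> 'a form" where
  "delta v A = Down (At A (WDot (WB 0) (WW (wnat v))))"

definition enc_rule :: "'v list \<Rightarrow> 'v trule \<Rightarrow> ('v \<times> bool) form" where
  "enc_rule V r = AllW (Lolli (At (enc_state V (fst r)) (WB 0))
                              (At (delta 1 (enc_state V (snd r))) (WB 0)))"

definition rule_ctx :: "'v list \<Rightarrow> 'v trule list \<Rightarrow> (('v \<times> bool) form \<times> world) set" where
  "rule_ctx V R = (\<lambda>r. (enc_rule V r, wnat 0)) ` set R"

end

(*
  Soundness is shown in a resource semantics: relative to a reduction relation on multisets of
  located facts (p, w), a formula at world w denotes the multisets that reduce to a realizer of it.
  Taking as reduction the firing of transition rules, where a rule consumes its pre-state at some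
  world x and produces its post-state at x.1, every encoded rule is valid.  Hence provability of
  the sequent makes the located facts of s at w reduce to those of s' at w.1; as each firing
  advances the world by exactly one, exactly one rule fired, so s --r--> s'.
  Conversely, the sequent is derived by copying the rule, instantiating its world quantifier
  at w and closing both premises of the implication by identity.
*)

theory Submission
  imports Defs
begin

type_synonym 'a fact = "'a \<times> world"

lemma size_fsubst [simp]: "size (fsubst k x A) = size A"
  by (induction A arbitrary: k) auto

fun is_goal :: "'a form \<Rightarrow> bool" where
  "is_goal (Atom p) = True"
| "is_goal (Tens A B) = (is_goal A \<and> is_goal B)"
| "is_goal One = True"
| "is_goal (Down A) = is_goal A"
| "is_goal (At A t) = is_goal A"
| "is_goal _ = False"

fun is_clause :: "'a form \<Rightarrow> bool" where
  "is_clause (Atom p) = True"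
| "is_clause (Tens A B) = (is_clause A \<and> is_clause B)"
| "is_clause One = True"
| "is_clause (Down A) = is_clause A"
| "is_clause (At A t) = is_clause A"
| "is_clause (AllW A) = is_clause A"
| "is_clause (Lolli A B) = (is_goal A \<and> is_clause B)"
| "is_clause _ = False"

lemma is_goal_fsubst [simp]: "is_goal (fsubst k x A) = is_goal A"
  by (induction A arbitrary: k) auto

lemma is_clause_fsubst [simp]: "is_clause (fsubst k x A) = is_clause A"
  by (induction A arbitrary: k) auto

lemma image_fst_eq_add_mset:
  "image_mset fst E = add_mset j D \<Longrightarrow> \<exists>E' M. E = add_mset (j, M) E' \<and> image_mset fst E' = D"
  using msed_map_invR by (metis prod.collapse)

locale rewrite_preorder =
  fixes red :: "'a fact multiset \<Rightarrow> 'a fact multiset \<Rightarrow> bool"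
  assumes red_refl: "red M M"
    and red_trans: "red M M' \<Longrightarrow> red M' M'' \<Longrightarrow> red M M''"
    and red_plus: "red M M' \<Longrightarrow> red (M + N) (M' + N)"
begin

text \<open>Only goals and clauses are meant to be interpreted; the remaining connectives get the
  junk value {}, which soundness never meets.\<close>

function sem :: "'a form \<Rightarrow> world \<Rightarrow> 'a fact multiset set" where
  "sem (Atom p) w = {M. red M {#(p, w)#}}"
| "sem (Tens A B) w = {M. \<exists>M1 M2. red M (M1 + M2) \<and> M1 \<in> sem A w \<and> M2 \<in> sem B w}"
| "sem One w = {M. red M {#}}"
| "sem (Lolli A B) w = {M. \<forall>N \<in> sem A w. M + N \<in> sem B w}"
| "sem (At A t) w = sem A (weval t)"
| "sem (Down A) w = sem (fsubst 0 w A) w"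
| "sem (AllW A) w = (\<Inter>x. sem (fsubst 0 x A) w)"
| "sem (With A B) w = {}"
| "sem Top w = {}"
| "sem (Plus A B) w = {}"
| "sem Zero w = {}"
| "sem (Bang A) w = {}"
| "sem (ExW A) w = {}"
  by pat_completeness auto
termination by (relation "measure (\<lambda>(A, w). size A)") auto

lemma sem_red_closed: "red M M' \<Longrightarrow> M' \<in> sem A w \<Longrightarrow> M \<in> sem A w"
proof (induction A w arbitrary: M M' rule: sem.induct)
  case (4 A B w)
  have "M' + N \<in> sem B w" if "N \<in> sem A w" for N
    using "4.prems"(2) that by simp
  then show ?case using "4.IH"(2) red_plus[OF "4.prems"(1)] by (simp only: sem.simps mem_Collect_eq) blast
qed (auto intro: red_trans)

lemma sem_Tens_eq:
  assumes "sem A w = {M. red M N1}" "sem B w = {M. red M N2}"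
  shows "sem (Tens A B) w = {M. red M (N1 + N2)}"
proof -
  have "red (M1 + M2) (N1 + N2)" if "red M1 N1" "red M2 N2" for M1 M2
    using red_trans red_plus[OF that(1)] red_plus[OF that(2), of N1] by (metis add.commute)
  then show ?thesis using assms red_trans by auto (use red_refl in blast)
qed

definition realizes :: "(('a form \<times> world) \<times> 'a fact multiset) multiset \<Rightarrow> bool" where
  "realizes E \<longleftrightarrow> (\<forall>e \<in># E. snd e \<in> sem (fst (fst e)) (snd (fst e)))"

lemma realizes_simps [simp]:
  "realizes {#}"
  "realizes (add_mset ((A, u), M) E) \<longleftrightarrow> M \<in> sem A u \<and> realizes E"
  "realizes (E1 + E2) \<longleftrightarrow> realizes E1 \<and> realizes E2"
  unfolding realizes_def by auto

abbreviation resources :: "(('a form \<times> world) \<times> 'a fact multiset) multiset \<Rightarrow> 'a fact multiset" where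
  "resources E \<equiv> sum_mset (image_mset snd E)"

theorem hyll_sound:
  assumes "hyll G D C w"
    and "\<forall>(A, u) \<in> G. is_clause A \<and> {#} \<in> sem A u" "\<forall>(A, u) \<in># D. is_clause A" "is_goal C"
    and "image_mset fst E = D" "realizes E"
  shows "resources E \<in> sem C w"
  using assms
proof (induction arbitrary: E rule: hyll.induct)
  case (init G p w)
  then obtain M where "E = {#((Atom p, w), M)#}"
    using image_fst_eq_add_mset[of E _ "{#}"] by auto
  then show ?case using init.prems by simp
next
  case (copy A u G D C w)
  have "resources (add_mset ((A, u), {#}) E) \<in> sem C w"
    using copy by (intro copy.IH) auto
  then show ?case by simp
next
  case (tensR G D1 A w D2 B)
  obtain E1 E2 where E: "E = E1 + E2" "D1 = image_mset fst E1" "D2 = image_mset fst E2"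
    using image_mset_eq_plusD[OF tensR.prems(4)] by blast
  have "resources E1 \<in> sem A w" "resources E2 \<in> sem B w"
    using tensR E by (intro tensR.IH; auto)+
  then show ?case using E red_refl by auto
next
  case (tensL G D A u B C w)
  obtain E' M where E: "E = add_mset ((Tens A B, u), M) E'" "image_mset fst E' = D"
    using image_fst_eq_add_mset tensL.prems(4) by fastforce
  then obtain M1 M2 where M: "red M (M1 + M2)" "M1 \<in> sem A u" "M2 \<in> sem B u"
    using tensL.prems(5) by auto
  have "resources (add_mset ((A, u), M1) (add_mset ((B, u), M2) E')) \<in> sem C w"
    using tensL E M by (intro tensL.IH) auto
  moreover have "red (M + resources E') (M1 + M2 + resources E')"
    using red_plus[OF M(1)] .
  ultimately show ?case using E sem_red_closed by (simp add: ac_simps)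
next
  case (oneR G w)
  then show ?case using red_refl by simp
next
  case (oneL G D C w u)
  obtain E' M where E: "E = add_mset ((One, u), M) E'" "image_mset fst E' = D"
    using image_fst_eq_add_mset oneL.prems(4) by fastforce
  have "resources E' \<in> sem C w"
    using oneL E by (intro oneL.IH) auto
  moreover have "red (M + resources E') ({#} + resources E')"
    using E oneL.prems(5) red_plus[of M "{#}"] by simp
  ultimately show ?case using E sem_red_closed by simp
next
  case (lolliL G D1 A u D2 B C w)
  obtain E' M where E: "E = add_mset ((Lolli A B, u), M) E'" "image_mset fst E' = D1 + D2"
    using image_fst_eq_add_mset lolliL.prems(4) by fastforce
  obtain E1 E2 where E12: "E' = E1 + E2" "D1 = image_mset fst E1" "D2 = image_mset fst E2"
    using image_mset_eq_plusD[OF E(2)] by blast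
  have "resources E1 \<in> sem A u"
    using lolliL E E12 by (intro lolliL.IH(1)) auto
  then have "M + resources E1 \<in> sem B u"
    using lolliL.prems(5) E by simp
  then have "resources (add_mset ((B, u), M + resources E1) E2) \<in> sem C w"
    using lolliL E E12 by (intro lolliL.IH(2)) auto
  then show ?case using E E12 by (simp add: ac_simps)
next
  case (atL G D A t C w u)
  obtain E' M where E: "E = add_mset ((At A t, u), M) E'" "image_mset fst E' = D"
    using image_fst_eq_add_mset atL.prems(4) by fastforce
  have "resources (add_mset ((A, weval t), M) E') \<in> sem C w"
    using atL E by (intro atL.IH) auto
  then show ?case using E by simp
next
  case (downL G D u A C w)
  obtain E' M where E: "E = add_mset ((Down A, u), M) E'" "image_mset fst E' = D"
    using image_fst_eq_add_mset downL.prems(4) by fastforce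
  have "resources (add_mset ((fsubst 0 u A, u), M) E') \<in> sem C w"
    using downL E by (intro downL.IH) auto
  then show ?case using E by simp
next
  case (allL G D x A u C w)
  obtain E' M where E: "E = add_mset ((AllW A, u), M) E'" "image_mset fst E' = D"
    using image_fst_eq_add_mset allL.prems(4) by fastforce
  have "M \<in> sem (fsubst 0 x A) u"
    using allL.prems(5) E by (simp only: realizes_simps sem.simps) blast
  then have "resources (add_mset ((fsubst 0 x A, u), M) E') \<in> sem C w"
    using allL E by (intro allL.IH) auto
  then show ?case using E by simp
qed simp_all

end

definition state_facts :: "'v list \<Rightarrow> 'v state \<Rightarrow> world \<Rightarrow> ('v \<times> bool) fact multiset" where
  "state_facts V s x = mset (map (\<lambda>a. ((a, s a), x)) V)"

lemma fsubst_tens_list: "fsubst k x (tens_list As) = tens_list (map (fsubst k x) As)"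
  by (induction As rule: tens_list.induct) auto

lemma is_goal_tens_list: "is_goal (tens_list As) \<longleftrightarrow> (\<forall>A \<in> set As. is_goal A)"
  by (induction As rule: tens_list.induct) auto

lemma is_clause_tens_list: "is_clause (tens_list As) \<longleftrightarrow> (\<forall>A \<in> set As. is_clause A)"
  by (induction As rule: tens_list.induct) auto

lemma fsubst_enc_state [simp]: "fsubst k x (enc_state V s) = enc_state V s"
  by (simp add: enc_state_def fsubst_tens_list comp_def)

lemma is_goal_enc_state [simp]: "is_goal (enc_state V s)"
  by (simp add: enc_state_def is_goal_tens_list)

lemma is_clause_enc_state [simp]: "is_clause (enc_state V s)"
  by (simp add: enc_state_def is_clause_tens_list)

lemma enc_state_cong: "\<forall>a \<in> set V. s a = t a \<Longrightarrow> enc_state V s = enc_state V t"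
  unfolding enc_state_def by (intro arg_cong[where f = tens_list] map_cong) auto

lemma fsubst_delta [simp]: "fsubst k x (delta v A) = delta v (fsubst (Suc k) x A)"
  by (simp add: delta_def)

context rewrite_preorder
begin

lemma sem_delta: "sem (delta v A) w = sem (fsubst 0 w A) (wdot w (wnat v))"
  by (simp add: delta_def)

lemma sem_tens_list_atoms:
  "ps \<noteq> [] \<Longrightarrow> sem (tens_list (map Atom ps)) x = {M. red M (mset (map (\<lambda>p. (p, x)) ps))}"
proof (induction ps rule: induct_list012)
  case (3 p q ps)
  then show ?case using sem_Tens_eq[of "Atom p" x "{#(p, x)#}"] by simp
qed simp_all

end

definition rule_step :: "'v list \<Rightarrow> 'v trule list \<Rightarrow>
    ('v \<times> bool) fact multiset \<Rightarrow> ('v \<times> bool) fact multiset \<Rightarrow> bool" where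
  "rule_step V R M M' \<longleftrightarrow> (\<exists>r \<in> set R. \<exists>x N.
      M = N + state_facts V (fst r) x \<and> M' = N + state_facts V (snd r) (wdot x (wnat 1)))"

lemma rule_step_plus:
  assumes "rule_step V R M M'"
  shows "rule_step V R (M + N) (M' + N)"
proof -
  obtain r x N0 where "r \<in> set R" "M = N0 + state_facts V (fst r) x"
    "M' = N0 + state_facts V (snd r) (wdot x (wnat 1))"
    using assms unfolding rule_step_def by blast
  then show ?thesis
    unfolding rule_step_def by (intro bexI[of _ r] exI[of _ x] exI[of _ "N0 + N"]) (simp_all add: ac_simps)
qed

lemma rtranclp_rule_step_plus: "(rule_step V R)\<^sup>*\<^sup>* M M' \<Longrightarrow> (rule_step V R)\<^sup>*\<^sup>* (M + N) (M' + N)"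
  by (induction rule: rtranclp_induct) (auto intro: rtranclp.rtrancl_into_rtrancl rule_step_plus)

interpretation rule_steps: rewrite_preorder "(rule_step V R)\<^sup>*\<^sup>*" for V R
  by unfold_locales (auto intro: rtranclp_rule_step_plus rtranclp_trans)

lemma wdot_wnat [simp]: "wdot (wnat n) (wnat m) = wnat (n + m)"
  by (simp add: wdot_def wnat_def)

lemma wdot_assoc: "wdot (wdot u v) x = wdot u (wdot v x)"
  by (simp add: wdot_def ac_simps)

lemma state_facts_eqD:
  assumes "V \<noteq> []" "state_facts V s w = state_facts V t u"
  shows "w = u \<and> (\<forall>a \<in> set V. s a = t a)"
proof -
  have "((a, s a), w) \<in># state_facts V t u" if "a \<in> set V" for a
  proof -
    have "((a, s a), w) \<in># state_facts V s w" using that by (simp add: state_facts_def)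
    then show ?thesis by (simp only: assms(2))
  qed
  moreover obtain a where "a \<in> set V" using assms(1) by (cases V) auto
  ultimately show ?thesis by (auto simp: state_facts_def)
qed

lemma rule_step_state_facts:
  assumes "V \<noteq> []" "rule_step V R (state_facts V t w) M"
  obtains r where "r \<in> set R" "\<forall>a \<in> set V. t a = fst r a"
    "M = state_facts V (snd r) (wdot w (wnat 1))"
proof -
  obtain r x N where r: "r \<in> set R" "state_facts V t w = N + state_facts V (fst r) x"
    "M = N + state_facts V (snd r) (wdot x (wnat 1))"
    using assms(2) unfolding rule_step_def by blast
  have "N = {#}"
    using arg_cong[OF r(2), of size] by (simp add: state_facts_def)
  with r(2) have "state_facts V t w = state_facts V (fst r) x" by simp
  from state_facts_eqD[OF assms(1) this] have "x = w" "\<forall>a \<in> set V. t a = fst r a" by simp_all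
  with r \<open>N = {#}\<close> show ?thesis by (intro that[of r]) simp_all
qed

lemma relpowp_rule_step_state_facts:
  assumes "V \<noteq> []" "(rule_step V R ^^ k) (state_facts V t w) M"
  shows "\<exists>t'. M = state_facts V t' (wdot w (wnat k))"
  using assms(2)
proof (induction k arbitrary: M)
  case 0
  then show ?case by (auto simp: wdot_def wnat_def)
next
  case (Suc k)
  obtain M' where "(rule_step V R ^^ k) (state_facts V t w) M'" "rule_step V R M' M"
    using Suc.prems by (rule relpowp_Suc_E)
  then obtain t' where "rule_step V R (state_facts V t' (wdot w (wnat k))) M"
    using Suc.IH by blast
  then obtain r where "r \<in> set R" "\<forall>a \<in> set V. t' a = fst r a"
      "M = state_facts V (snd r) (wdot (wdot w (wnat k)) (wnat 1))"
    by (rule rule_step_state_facts[OF assms(1)])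
  then show ?case by (intro exI[of _ "snd r"]) (simp add: wdot_assoc)
qed

text \<open>Every firing advances the world by exactly one, so a reduction from the state
  at w to a state at w.1 fires exactly one rule.\<close>

lemma rule_steps_one_tick:
  assumes "V \<noteq> []"
    and "(rule_step V R)\<^sup>*\<^sup>* (state_facts V s w) (state_facts V s' (wdot w (wnat 1)))"
  obtains r where "r \<in> set R" "\<forall>a \<in> set V. s a = fst r a \<and> s' a = snd r a"
proof -
  obtain k where k: "(rule_step V R ^^ k) (state_facts V s w) (state_facts V s' (wdot w (wnat 1)))"
    using assms(2) by (metis rtranclp_power)
  then obtain t' where "state_facts V s' (wdot w (wnat 1)) = state_facts V t' (wdot w (wnat k))"
    using relpowp_rule_step_state_facts[OF assms(1)] by blast
  then have "wdot w (wnat 1) = wdot w (wnat k)"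
    using state_facts_eqD[OF assms(1)] by blast
  then have "k = 1" by (simp add: wdot_def wnat_def)
  then have "rule_step V R (state_facts V s w) (state_facts V s' (wdot w (wnat 1)))"
    using k unfolding \<open>k = 1\<close> relpowp_1 by blast
  then obtain r where "r \<in> set R" "\<forall>a \<in> set V. s a = fst r a"
      "state_facts V s' (wdot w (wnat 1)) = state_facts V (snd r) (wdot w (wnat 1))"
    by (rule rule_step_state_facts[OF assms(1)])
  moreover from this(3) have "\<forall>a \<in> set V. s' a = snd r a"
    using state_facts_eqD[OF assms(1)] by blast
  ultimately show ?thesis using that by blast
qed

lemma sem_enc_state:
  "V \<noteq> [] \<Longrightarrow> rule_steps.sem V R (enc_state V s) x = {M. (rule_step V R)\<^sup>*\<^sup>* M (state_facts V s x)}"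
  using rule_steps.sem_tens_list_atoms[of "map (\<lambda>a. (a, s a)) V"]
  by (simp add: enc_state_def state_facts_def comp_def)

lemma enc_rule_valid:
  assumes "V \<noteq> []" "r \<in> set R"
  shows "{#} \<in> rule_steps.sem V R (enc_rule V r) w"
proof -
  have "rule_step V R (state_facts V (fst r) x) (state_facts V (snd r) (wdot x (wnat 1)))" for x
    unfolding rule_step_def using assms(2) by (metis add_0)
  then show ?thesis
    using assms(1) by (auto simp: enc_rule_def sem_enc_state rule_steps.sem_delta
        intro: rtranclp.rtrancl_into_rtrancl)
qed

lemma rule_steps_of_hyll:
  assumes "V \<noteq> []" "hyll (rule_ctx V R) {#(enc_state V s, w)#} (delta 1 (enc_state V s')) w"
  shows "(rule_step V R)\<^sup>*\<^sup>* (state_facts V s w) (state_facts V s' (wdot w (wnat 1)))"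
proof -
  have "\<forall>(A, u) \<in> rule_ctx V R. is_clause A \<and> {#} \<in> rule_steps.sem V R A u"
    using enc_rule_valid[OF assms(1)] by (auto simp: rule_ctx_def enc_rule_def delta_def)
  then have "sum_mset (image_mset snd {#((enc_state V s, w), state_facts V s w)#})
      \<in> rule_steps.sem V R (delta 1 (enc_state V s')) w"
    using assms by (intro rule_steps.hyll_sound[OF assms(2)])
      (auto simp: sem_enc_state delta_def)
  then show ?thesis
    using assms(1) by (simp add: rule_steps.sem_delta sem_enc_state)
qed

lemma hyll_enc_state_refl: "hyll G {#(enc_state V s, w)#} (enc_state V s) w"
proof (induction V rule: induct_list012)
  case 1
  have "hyll G ({#} + {#(One, w)#}) One w" by (rule hyll.oneL[OF hyll.oneR])
  then show ?case by (simp add: enc_state_def)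
next
  case (2 a)
  then show ?case by (simp add: enc_state_def hyll.init)
next
  case (3 a b V)
  let ?A = "Atom (a, s a)" and ?T = "enc_state (b # V) s"
  have "hyll G ({#(?A, w)#} + {#(?T, w)#}) (Tens ?A ?T) w"
    by (rule hyll.tensR[OF hyll.init "3.IH"(2)])
  then have "hyll G ({#} + {#(?A, w), (?T, w)#}) (Tens ?A ?T) w"
    by (simp add: add_mset_commute)
  then have "hyll G ({#} + {#(Tens ?A ?T, w)#}) (Tens ?A ?T) w"
    by (rule hyll.tensL)
  then show ?case by (simp add: enc_state_def)
qed

lemma hyll_delta_refl:
  assumes "hyll G {#(A, wdot w (wnat v))#} A (wdot w (wnat v))" and closed: "fsubst 0 w A = A"
  shows "hyll G {#(delta v A, w)#} (delta v A) w"
proof -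
  let ?t = "WDot (WW w) (WW (wnat v))" and ?A = "At A (WDot (WB 0) (WW (wnat v)))"
  have "hyll G {#(A, weval ?t)#} (At A ?t) w"
    by (rule hyll.atR) (simp add: assms(1))
  then have "hyll G ({#} + {#(At A ?t, w)#}) (At A ?t) w"
    by (intro hyll.atL) simp
  then have "hyll G ({#} + {#(fsubst 0 w ?A, w)#}) (At A ?t) w"
    by (simp add: closed)
  then have "hyll G ({#} + {#(delta v A, w)#}) (At A ?t) w"
    unfolding delta_def by (rule hyll.downL)
  then have "hyll G {#(delta v A, w)#} (fsubst 0 w ?A) w"
    by (simp add: closed)
  then show ?thesis
    unfolding delta_def by (rule hyll.downR)
qed

lemma hyll_enc_rule_apply:
  assumes "(enc_rule V r, wnat 0) \<in> G"
  shows "hyll G {#(enc_state V (fst r), w)#} (delta 1 (enc_state V (snd r))) w"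
proof -
  let ?Q = "enc_state V (fst r)" and ?P = "enc_state V (snd r)"
  have "hyll G {#(delta 1 ?P, w)#} (delta 1 ?P) w"
    by (rule hyll_delta_refl[OF hyll_enc_state_refl]) simp
  then have post: "hyll G ({#} + {#(At (delta 1 ?P) (WW w), wnat 0)#}) (delta 1 ?P) w"
    by (intro hyll.atL) simp
  have pre: "hyll G {#(?Q, w)#} (At ?Q (WW w)) (wnat 0)"
    by (rule hyll.atR) (simp add: hyll_enc_state_refl)
  have "hyll G ({#(?Q, w)#} + {#} + {#(Lolli (At ?Q (WW w)) (At (delta 1 ?P) (WW w)), wnat 0)#})
      (delta 1 ?P) w"
    by (rule hyll.lolliL[OF pre post])
  then have "hyll G ({#(?Q, w)#} + {#(fsubst 0 w (Lolli (At ?Q (WB 0)) (At (delta 1 ?P) (WB 0))),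
      wnat 0)#}) (delta 1 ?P) w"
    by simp
  then have "hyll G ({#(?Q, w)#} + {#(enc_rule V r, wnat 0)#}) (delta 1 ?P) w"
    unfolding enc_rule_def by (rule hyll.allL)
  then show ?thesis by (rule hyll.copy[OF assms])
qed

theorem proposition1:
  fixes V :: "'v list" and R :: "'v trule list" and s s' :: "'v state" and n :: nat
  assumes "distinct V" and "V \<noteq> []"
  shows "(\<exists>i < length R. enables V (R ! i) s s') \<longleftrightarrow>
         hyll (rule_ctx V R) {#(enc_state V s, wnat n)#} (delta 1 (enc_state V s')) (wnat n)"
proof
  assume "\<exists>i < length R. enables V (R ! i) s s'"
  then obtain r where r: "r \<in> set R" "enables V r s s'"
    by (metis nth_mem)
  then have "enc_state V s = enc_state V (fst r)" "enc_state V s' = enc_state V (snd r)"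
    by (auto simp: enables_def intro: enc_state_cong)
  moreover have "(enc_rule V r, wnat 0) \<in> rule_ctx V R"
    using r(1) by (simp add: rule_ctx_def)
  ultimately show "hyll (rule_ctx V R) {#(enc_state V s, wnat n)#} (delta 1 (enc_state V s')) (wnat n)"
    using hyll_enc_rule_apply by metis
next
  assume "hyll (rule_ctx V R) {#(enc_state V s, wnat n)#} (delta 1 (enc_state V s')) (wnat n)"
  then have "(rule_step V R)\<^sup>*\<^sup>* (state_facts V s (wnat n)) (state_facts V s' (wdot (wnat n) (wnat 1)))"
    by (rule rule_steps_of_hyll[OF assms(2)])
  then obtain r where "r \<in> set R" "\<forall>a \<in> set V. s a = fst r a \<and> s' a = snd r a"
    by (rule rule_steps_one_tick[OF assms(2)])
  then show "\<exists>i < length R. enables V (R ! i) s s'"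
    by (auto simp: enables_def in_set_conv_nth)
qed

end
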